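(* For every integer $n\ge0$, $$\sum_{k=0}^n\frac{\binom{2n+1}{k}(-1)^k}{k-(2n+1)}=-\frac34\sum_{k=1}^n\frac{\binom{2k}{k}(-1)^k}{k}-\sum_{k=0}^n\frac{\binom{2k}{k}(-1)^k}{2k+1}.$$ *)

theory Defs
  imports Complex_Main
begin

end

theory Submission
  imports Defs
begin

text \<open>
  Both sides equal \<open>(-1)^(n+1) A n\<close> with \<open>A n = (\<Sum>t\<le>n. (n+t choose n) / (n+t+1))\<close>.
  On the left, the reflection \<open>k \<mapsto> 2n+1-k\<close> turns the sum into the alternating tail
  \<open>\<Sum>j>n. (-1)^j (2n+1 choose j) / j\<close>; the absorption identity
  \<open>(m+1 choose j)/j = (m choose j)/j + (m+1 choose j)/(m+1)\<close> lowers the top index one step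
  at a time, each step contributing a partial alternating row sum \<open>\<plusminus>(m choose r)/(m+1)\<close>.
  On the right, \<open>A (n+1) + A n\<close> is evaluated by telescoping with a Gosper certificate and
  equals \<open>(2n+2 choose n+1) (3/(4(n+1)) + 1/(2n+3))\<close>, which is exactly the increment of
  the right-hand side.
\<close>

lemma alternating_partial_row_sum:
  "(\<Sum>j\<le>r. (-1)^j * real (Suc m choose j)) = (-1)^r * real (m choose r)"
  using gbinomial_sum_lower_neg[of "real (Suc m)" r]
  by (simp add: binomial_gbinomial mult.commute)

lemma alternating_row_tail_sum:
  assumes "r \<le> m"
  shows "(\<Sum>j=Suc r..Suc m. (-1)^j * real (Suc m choose j)) = (-1)^Suc r * real (m choose r)"
proof -
  have split: "r + (Suc m - r) = Suc m"
    using assms by simp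
  have "(\<Sum>j\<le>r. (-1)^j * real (Suc m choose j)) + (\<Sum>j=Suc r..Suc m. (-1)^j * real (Suc m choose j))
      = (\<Sum>j\<le>Suc m. (-1)^j * real (Suc m choose j))"
    using sum_up_index_split[of _ r "Suc m - r"] unfolding split by (rule sym)
  also have "\<dots> = 0"
    using choose_alternating_sum[of "Suc m", where 'a=real] by (simp add: atLeast0AtMost)
  finally show ?thesis
    by (simp add: alternating_partial_row_sum)
qed

lemma choose_over_index_absorb:
  assumes "j > 0"
  shows "real (Suc m choose j) / real j = real (m choose j) / real j + real (Suc m choose j) / real (Suc m)"
proof -
  obtain i where j: "j = Suc i" using assms by (cases j) auto
  have "real (m choose i) / real j = real (Suc m choose j) / real (Suc m)"
    using Suc_times_binomial_eq[of m i] unfolding j by (simp add: field_simps flip: of_nat_mult)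
  then show ?thesis unfolding j by (simp add: add_divide_distrib)
qed

definition diag_ratio :: "nat \<Rightarrow> nat \<Rightarrow> real" where
  "diag_ratio r t = real (r + t choose r) / real (r + t + 1)"

lemma alternating_tail_sum_choose_over_index:
  "(\<Sum>j=Suc r..r+d. (-1)^j * real (r+d choose j) / real j) = (-1)^Suc r * (\<Sum>t<d. diag_ratio r t)"
proof (induction d)
  case 0
  then show ?case by simp
next
  case (Suc d)
  define m where "m = r + d"
  have "(\<Sum>j=Suc r..Suc m. (-1)^j * real (Suc m choose j) / real j)
      = (\<Sum>j=Suc r..Suc m. (-1)^j * real (m choose j) / real j
          + (-1)^j * real (Suc m choose j) / real (Suc m))"
    by (intro sum.cong refl) (simp add: choose_over_index_absorb flip: times_divide_eq_right distrib_left)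
  also have "\<dots> = (\<Sum>j=Suc r..Suc m. (-1)^j * real (m choose j) / real j)
        + (\<Sum>j=Suc r..Suc m. (-1)^j * real (Suc m choose j)) / real (Suc m)"
    by (simp only: sum.distrib sum_divide_distrib)
  also have "(\<Sum>j=Suc r..Suc m. (-1)^j * real (m choose j) / real j)
      = (\<Sum>j=Suc r..m. (-1)^j * real (m choose j) / real j)"
    by (simp add: m_def)
  also have "(\<Sum>j=Suc r..Suc m. (-1)^j * real (Suc m choose j)) = (-1)^Suc r * real (m choose r)"
    by (rule alternating_row_tail_sum) (simp add: m_def)
  finally show ?case
    using Suc.IH by (simp add: m_def diag_ratio_def algebra_simps)
qed

definition diag_sum :: "nat \<Rightarrow> real" where
  "diag_sum n = (\<Sum>t\<le>n. diag_ratio n t)"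

lemma diag_ratio_Suc_left:
  "diag_ratio (Suc n) s = real (n+s choose n) * real (n+s+1) / (real (n+1) * real (n+s+2))"
proof -
  have "real (Suc (n+s) choose Suc n) * real (n+1) = real (n+s+1) * real (n+s choose n)"
    by (metis Suc_eq_plus1 Suc_times_binomial_eq mult.commute of_nat_mult)
  then have binom: "real (Suc (n+s) choose Suc n) = real (n+s choose n) * real (n+s+1) / real (n+1)"
    by (simp add: field_simps del: binomial_Suc_Suc)
  show ?thesis
    unfolding diag_ratio_def add_Suc binom by simp
qed

lemma diag_ratio_Suc_right:
  "diag_ratio n (Suc s) = real (n+s choose n) * real (n+s+1) / (real (s+1) * real (n+s+2))"
proof -
  have "Suc s * (Suc (n+s) choose n) = Suc (n+s) * (n+s choose n)"
    using Suc_times_binomial_add[of n s] Suc_times_binomial_eq[of "n+s" n] by (metis mult.commute)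
  then have "real (s+1) * real (Suc (n+s) choose n) = real (n+s+1) * real (n+s choose n)"
    by (metis Suc_eq_plus1 of_nat_mult)
  then have binom: "real (Suc (n+s) choose n) = real (n+s choose n) * real (n+s+1) / real (s+1)"
    by (simp add: field_simps)
  show ?thesis
    unfolding diag_ratio_def add_Suc_right binom by simp
qed

text \<open>Gosper's certificate for \<open>s \<mapsto> diag_ratio (Suc n) s + diag_ratio n s\<close>.\<close>

definition diag_certificate :: "nat \<Rightarrow> nat \<Rightarrow> real" where
  "diag_certificate n s = diag_ratio n s * real s * real (s + 2*n + 2) / real (n+1)^2"

lemma diag_ratio_Suc_add_telescopes:
  "diag_ratio (Suc n) s + diag_ratio n s = diag_certificate n (Suc s) - diag_certificate n s"
proof -
  have "real n + 1 \<noteq> 0" "real s + 1 \<noteq> 0" "real n + real s + 1 \<noteq> 0" "real n + real s + 2 \<noteq> 0"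
    by linarith+
  then show ?thesis
    unfolding diag_certificate_def diag_ratio_Suc_left diag_ratio_Suc_right
    by (simp add: diag_ratio_def divide_simps power2_eq_square) algebra
qed

lemma sum_diag_ratio_Suc_add:
  "(\<Sum>t<s. diag_ratio (Suc n) t + diag_ratio n t) = diag_certificate n s"
  using sum_lessThan_telescope[of "diag_certificate n" s]
  by (simp add: diag_ratio_Suc_add_telescopes diag_certificate_def)

lemma central_binomial_Suc: "(2*n+2 choose (n+1)) = 2 * (2*n+1 choose n)"
proof -
  have "(n+1) * (2*n+2 choose (n+1)) = (n+1) * (2 * (2*n+1 choose n))"
    using Suc_times_binomial_eq[of "2*n+1" n] by (simp add: algebra_simps del: binomial_Suc_Suc)
  then show ?thesis
    by (rule mult_left_cancel[THEN iffD1, rotated]) simp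
qed

lemma diag_sum_Suc_add:
  "diag_sum (Suc n) + diag_sum n
     = real (2*n+2 choose (n+1)) * (3 / (4 * real (n+1)) + 1 / (2 * real n + 3))"
proof -
  have "diag_sum (Suc n) + diag_sum n
      = (\<Sum>t<Suc n. diag_ratio (Suc n) t + diag_ratio n t) + diag_ratio (Suc n) (Suc n)"
    by (simp add: diag_sum_def sum.distrib lessThan_Suc_atMost)
  also have "\<dots> = diag_certificate n (Suc n) + diag_ratio (Suc n) (Suc n)"
    by (simp only: sum_diag_ratio_Suc_add)
  also have "diag_certificate n (Suc n) = 3 / 4 * real (2*n+2 choose (n+1)) / real (n+1)"
  proof -
    have "n + Suc n = 2*n+1" "n + Suc n + 1 = 2*(n+1)"
      by simp_all
    then have ratio: "diag_ratio n (Suc n) = real (2*n+1 choose n) / (2 * real (n+1))"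
      unfolding diag_ratio_def by (metis of_nat_mult of_nat_numeral)
    have num: "real (Suc n + 2*n + 2) = 3 * real (n+1)" "real (Suc n) = real (n+1)"
      by simp_all
    have cancel: "c / (2 * m) * m * (3 * m) / m^2 = 3 / 4 * (2 * c) / m" if "m \<noteq> 0" for c m :: real
      using that by (simp add: field_simps power2_eq_square)
    show ?thesis
      unfolding diag_certificate_def central_binomial_Suc ratio num of_nat_mult of_nat_numeral
      by (rule cancel) simp
  qed
  also have "diag_ratio (Suc n) (Suc n) = real (2*n+2 choose (n+1)) / (2 * real n + 3)"
  proof -
    have double: "Suc n + Suc n = 2*n+2"
      by simp
    show ?thesis
      unfolding diag_ratio_def double by (simp del: binomial_Suc_Suc)
  qed
  finally show ?thesis
    by (simp add: distrib_left del: binomial_Suc_Suc)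
qed

lemma alternating_central_binomial_sums:
  "- (3/4) * (\<Sum>k=1..n. real ((2*k) choose k) * (-1)^k / real k)
     - (\<Sum>k=0..n. real ((2*k) choose k) * (-1)^k / (2 * real k + 1))
   = (-1)^Suc n * diag_sum n"
proof (induction n)
  case 0
  show ?case by (simp add: diag_sum_def diag_ratio_def)
next
  case (Suc n)
  have "- (3/4) * (\<Sum>k=1..Suc n. real ((2*k) choose k) * (-1)^k / real k)
          - (\<Sum>k=0..Suc n. real ((2*k) choose k) * (-1)^k / (2 * real k + 1))
      = - (3/4) * (\<Sum>k=1..n. real ((2*k) choose k) * (-1)^k / real k)
          - (\<Sum>k=0..n. real ((2*k) choose k) * (-1)^k / (2 * real k + 1))
        - (-1)^Suc n * real (2*n+2 choose (n+1)) * (3 / (4 * real (n+1)) + 1 / (2 * real n + 3))"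
    by (simp add: algebra_simps add_divide_distrib del: binomial_Suc_Suc)
  also have "\<dots> = (-1)^Suc n * diag_sum n - (-1)^Suc n * (diag_sum (Suc n) + diag_sum n)"
    by (simp only: Suc.IH diag_sum_Suc_add mult.assoc)
  also have "\<dots> = (-1)^Suc (Suc n) * diag_sum (Suc n)"
    by (simp add: algebra_simps)
  finally show ?case .
qed

lemma odd_row_reflected_sum:
  "(\<Sum>k=0..n. real ((2*n+1) choose k) * (-1)^k / (real k - real (2*n+1))) = (-1)^Suc n * diag_sum n"
proof -
  define m where "m = 2*n+1"
  have "(\<Sum>k=0..n. real (m choose k) * (-1)^k / (real k - real m))
      = (\<Sum>j=Suc n..n + Suc n. (-1)^j * real (n + Suc n choose j) / real j)"
  proof (rule sum.reindex_bij_witness[of _ "\<lambda>j. m - j" "\<lambda>k. m - k"])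
    fix k
    assume "k \<in> {0..n}"
    then have "k \<le> n" by simp
    then have "m - k = 2*(n-k) + 1 + k" and choose: "m choose (m-k) = m choose k"
      and diff: "real (m - k) = real m - real k"
      unfolding m_def using binomial_symmetric[of k "2*n+1"] by simp_all
    then have sign: "(-1::real)^(m-k) = - ((-1)^k)"
      by (simp add: power_add power_mult)
    have row: "n + Suc n = m"
      unfolding m_def by simp
    show "(-1)^(m-k) * real (n + Suc n choose (m-k)) / real (m-k)
        = real (m choose k) * (-1)^k / (real k - real m)"
      unfolding row sign choose diff by (simp add: mult.commute flip: divide_minus_right)
  qed (auto simp: m_def)
  also have "\<dots> = (-1)^Suc n * diag_sum n"
    unfolding alternating_tail_sum_choose_over_index diag_sum_def lessThan_Suc_atMost ..
  finally show ?thesis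
    unfolding m_def .
qed

theorem mainTheorem11:
  fixes n :: nat
  shows "(\<Sum>k=0..n. real ((2*n+1) choose k) * (-1)^k / (real k - real (2*n+1)))
       = - (3/4) * (\<Sum>k=1..n. real ((2*k) choose k) * (-1)^k / real k)
         - (\<Sum>k=0..n. real ((2*k) choose k) * (-1)^k / (2 * real k + 1))"
  unfolding odd_row_reflected_sum alternating_central_binomial_sums ..

end
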